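(* Let $\mathbb{C}$ be a pointed category with finite products that has normal projections. Then $\mathbb{C}$ has a subtractive theory of abelian objects, i.e., the following hold: (A1) for any objects $X,X'$ equipped with subtractions $s\colon X\times X\to X$ and $s'\colon X'\times X'\to X'$, every morphism $g\colon X\to X'$ is homomorphic with respect to them, i.e., $g\circ s=s'\circ(g\times g)$; (A2) on any object $X$ there is at most one subtraction, and if $s$ is a subtraction on $X$ then $s$ is the subtraction $s(x,y)=x-y$ of an internal abelian group structure on $X$; (A3) if $X,X'$ are underlying objects of internal abelian groups in $\mathbb{C}$, then every morphism $X\to X'$ is a homomorphism of these internal abelian groups.
   Context: A pointed category $\mathbb{C}$ with finite products has normal projections if for all objects $X,Y$ the product projection $\pi_2\colon X\times Y\to Y$ is a cokernel of the morphism $(1_X,0)\colon X\to X\times Y$. Using generalised elements, a morphism $s\colon X\times X\to X$ is a subtraction on $X$ if $s\circ(1_X,1_X)=0$ and $s\circ(1_X,0)=1_X$ (i.e., $s(x,x)=0$ and $s(x,0)=x$). A morphism $g\colon X\to X'$ is homomorphic with respect to subtractions $s$ on $X$ and $s'$ on $X'$ if $g(s(x,y))=s'(g(x),g(y))$, i.e., $g\circ s=s'\circ(g\times g)$. An internal abelian group in $\mathbb{C}$ is an object with morphisms for addition, zero and negation satisfying the abelian group axioms internally. *)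

theory Defs
  imports Main
begin

text \<open>A category with morphisms of type 'm and objects of type 'o
  (every element of 'm is a morphism, every element of 'o an object).
  ccomp C g f denotes g composed after f.\<close>

record ('o, 'm) cat =
  cdom  :: "'m \<Rightarrow> 'o"
  ccod  :: "'m \<Rightarrow> 'o"
  ccomp :: "'m \<Rightarrow> 'm \<Rightarrow> 'm"
  cid   :: "'o \<Rightarrow> 'm"

definition hom :: "('o, 'm) cat \<Rightarrow> 'o \<Rightarrow> 'o \<Rightarrow> 'm set" where
  "hom C X Y = {f. cdom C f = X \<and> ccod C f = Y}"

definition category :: "('o, 'm) cat \<Rightarrow> bool" where
  "category C \<longleftrightarrow>
     (\<forall>X. cid C X \<in> hom C X X) \<and>
     (\<forall>f g. ccod C f = cdom C g \<longrightarrow> ccomp C g f \<in> hom C (cdom C f) (ccod C g)) \<and>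
     (\<forall>f. ccomp C f (cid C (cdom C f)) = f \<and> ccomp C (cid C (ccod C f)) f = f) \<and>
     (\<forall>f g h. ccod C f = cdom C g \<longrightarrow> ccod C g = cdom C h \<longrightarrow>
        ccomp C h (ccomp C g f) = ccomp C (ccomp C h g) f)"

definition terminal :: "('o, 'm) cat \<Rightarrow> 'o \<Rightarrow> bool" where
  "terminal C T \<longleftrightarrow> (\<forall>X. \<exists>!f. f \<in> hom C X T)"

definition initial :: "('o, 'm) cat \<Rightarrow> 'o \<Rightarrow> bool" where
  "initial C I \<longleftrightarrow> (\<forall>X. \<exists>!f. f \<in> hom C I X)"

definition zero_object :: "('o, 'm) cat \<Rightarrow> 'o \<Rightarrow> bool" where
  "zero_object C Z \<longleftrightarrow> initial C Z \<and> terminal C Z"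

definition pointed :: "('o, 'm) cat \<Rightarrow> bool" where
  "pointed C \<longleftrightarrow> category C \<and> (\<exists>Z. zero_object C Z)"

definition zmor :: "('o, 'm) cat \<Rightarrow> 'o \<Rightarrow> 'o \<Rightarrow> 'm" where
  "zmor C X Y = (let Z = (SOME Z. zero_object C Z)
     in ccomp C (THE f. f \<in> hom C Z Y) (THE f. f \<in> hom C X Z))"

definition is_product :: "('o, 'm) cat \<Rightarrow> 'o \<Rightarrow> 'o \<Rightarrow> 'o \<Rightarrow> 'm \<Rightarrow> 'm \<Rightarrow> bool" where
  "is_product C P X Y p q \<longleftrightarrow> p \<in> hom C P X \<and> q \<in> hom C P Y \<and>
     (\<forall>T f g. f \<in> hom C T X \<longrightarrow> g \<in> hom C T Y \<longrightarrow>
        (\<exists>!h. h \<in> hom C T P \<and> ccomp C p h = f \<and> ccomp C q h = g))"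

definition has_finite_products :: "('o, 'm) cat \<Rightarrow> bool" where
  "has_finite_products C \<longleftrightarrow> (\<exists>T. terminal C T) \<and>
     (\<forall>X Y. \<exists>P p q. is_product C P X Y p q)"

definition prod_choice :: "('o, 'm) cat \<Rightarrow> 'o \<Rightarrow> 'o \<Rightarrow> 'o \<times> 'm \<times> 'm" where
  "prod_choice C X Y = (SOME (P, p, q). is_product C P X Y p q)"

definition prodobj :: "('o, 'm) cat \<Rightarrow> 'o \<Rightarrow> 'o \<Rightarrow> 'o" where
  "prodobj C X Y = fst (prod_choice C X Y)"

definition proj1 :: "('o, 'm) cat \<Rightarrow> 'o \<Rightarrow> 'o \<Rightarrow> 'm" where
  "proj1 C X Y = fst (snd (prod_choice C X Y))"

definition proj2 :: "('o, 'm) cat \<Rightarrow> 'o \<Rightarrow> 'o \<Rightarrow> 'm" where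
  "proj2 C X Y = snd (snd (prod_choice C X Y))"

definition pair :: "('o, 'm) cat \<Rightarrow> 'm \<Rightarrow> 'm \<Rightarrow> 'm" where
  "pair C f g = (THE h. h \<in> hom C (cdom C f) (prodobj C (ccod C f) (ccod C g)) \<and>
      ccomp C (proj1 C (ccod C f) (ccod C g)) h = f \<and>
      ccomp C (proj2 C (ccod C f) (ccod C g)) h = g)"

definition prodmap :: "('o, 'm) cat \<Rightarrow> 'm \<Rightarrow> 'm \<Rightarrow> 'm" where
  "prodmap C f g = pair C (ccomp C f (proj1 C (cdom C f) (cdom C g)))
                           (ccomp C g (proj2 C (cdom C f) (cdom C g)))"

definition cokernel :: "('o, 'm) cat \<Rightarrow> 'm \<Rightarrow> 'm \<Rightarrow> bool" where
  "cokernel C f q \<longleftrightarrow> cdom C q = ccod C f \<and>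
     ccomp C q f = zmor C (cdom C f) (ccod C q) \<and>
     (\<forall>g. cdom C g = ccod C f \<longrightarrow> ccomp C g f = zmor C (cdom C f) (ccod C g) \<longrightarrow>
        (\<exists>!h. h \<in> hom C (ccod C q) (ccod C g) \<and> ccomp C h q = g))"

definition normal_projections :: "('o, 'm) cat \<Rightarrow> bool" where
  "normal_projections C \<longleftrightarrow>
     (\<forall>X Y. cokernel C (pair C (cid C X) (zmor C X Y)) (proj2 C X Y))"

definition subtraction :: "('o, 'm) cat \<Rightarrow> 'o \<Rightarrow> 'm \<Rightarrow> bool" where
  "subtraction C X s \<longleftrightarrow> s \<in> hom C (prodobj C X X) X \<and>
     ccomp C s (pair C (cid C X) (cid C X)) = zmor C X X \<and>
     ccomp C s (pair C (cid C X) (zmor C X X)) = cid C X"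

definition homomorphic :: "('o, 'm) cat \<Rightarrow> 'm \<Rightarrow> 'm \<Rightarrow> 'm \<Rightarrow> bool" where
  "homomorphic C s s' g \<longleftrightarrow> ccomp C g s = ccomp C s' (prodmap C g g)"

definition term_obj :: "('o, 'm) cat \<Rightarrow> 'o" where
  "term_obj C = (SOME T. terminal C T)"

definition bang :: "('o, 'm) cat \<Rightarrow> 'o \<Rightarrow> 'm" where
  "bang C X = (THE f. f \<in> hom C X (term_obj C))"

text \<open>Internal abelian group (X, m, e, n): m : X \<times> X \<rightarrow> X, e : 1 \<rightarrow> X, n : X \<rightarrow> X,
  axioms stated with generalised elements x, y, z : T \<rightarrow> X (equivalent by Yoneda to
  the internal diagrammatic axioms).\<close>
definition internal_ab_group :: "('o, 'm) cat \<Rightarrow> 'o \<Rightarrow> 'm \<Rightarrow> 'm \<Rightarrow> 'm \<Rightarrow> bool" where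
  "internal_ab_group C X m e n \<longleftrightarrow>
     m \<in> hom C (prodobj C X X) X \<and> e \<in> hom C (term_obj C) X \<and> n \<in> hom C X X \<and>
     (\<forall>T x y z. x \<in> hom C T X \<longrightarrow> y \<in> hom C T X \<longrightarrow> z \<in> hom C T X \<longrightarrow>
        ccomp C m (pair C (ccomp C m (pair C x y)) z) =
        ccomp C m (pair C x (ccomp C m (pair C y z)))) \<and>
     (\<forall>T x. x \<in> hom C T X \<longrightarrow> ccomp C m (pair C x (ccomp C e (bang C T))) = x) \<and>
     (\<forall>T x. x \<in> hom C T X \<longrightarrow> ccomp C m (pair C x (ccomp C n x)) = ccomp C e (bang C T)) \<and>
     (\<forall>T x y. x \<in> hom C T X \<longrightarrow> y \<in> hom C T X \<longrightarrow>
        ccomp C m (pair C x y) = ccomp C m (pair C y x))"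

definition internal_group_hom :: "('o, 'm) cat \<Rightarrow> 'm \<Rightarrow> 'm \<Rightarrow> 'm \<Rightarrow> bool" where
  "internal_group_hom C m m' g \<longleftrightarrow> ccomp C g m = ccomp C m' (prodmap C g g)"

end

theory Submission
  imports Defs
begin

text \<open>Normal projections say that a map \<open>f : X \<times> Y \<rightarrow> Z\<close> with \<open>f(x, 0) = 0\<close> satisfies
  \<open>f(x, y) = f(0, y)\<close>. Applied to the difference of two maps into an object with a subtraction,
  this shows that two such maps out of \<open>X \<times> Y\<close> coincide once they coincide on the axes
  \<open>X \<times> 0\<close> and \<open>0 \<times> Y\<close>. Every claim of the theorem is an equation of this kind, and on the axes
  it reduces to the subtraction axioms together with \<open>0 - (0 - x) = x\<close> and
  \<open>g(0 - x) = 0 - g(x)\<close>, which follow from normal projections in the same way. The abelian group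
  carried by a subtraction is \<open>x + y = x - (0 - y)\<close>.\<close>

lemma in_hom_iff [simp]: "f \<in> hom C X Y \<longleftrightarrow> cdom C f = X \<and> ccod C f = Y"
  by (simp add: hom_def)

locale categorical =
  fixes C :: "('o, 'm) cat"
  assumes category: "category C"
begin

abbreviation comp_syntax (infixr "\<cdot>" 55) where "g \<cdot> f \<equiv> ccomp C g f"
abbreviation id_syntax ("\<one>\<^bsub>_\<^esub>") where "\<one>\<^bsub>X\<^esub> \<equiv> cid C X"

lemma dom_id [simp]: "cdom C \<one>\<^bsub>X\<^esub> = X" and cod_id [simp]: "ccod C \<one>\<^bsub>X\<^esub> = X"
  using category by (auto simp: category_def)

lemma dom_comp [simp]: "ccod C f = cdom C g \<Longrightarrow> cdom C (g \<cdot> f) = cdom C f"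
  and cod_comp [simp]: "ccod C f = cdom C g \<Longrightarrow> ccod C (g \<cdot> f) = ccod C g"
  using category by (auto simp: category_def)

lemma comp_id [simp]: "cdom C f = X \<Longrightarrow> f \<cdot> \<one>\<^bsub>X\<^esub> = f"
  and id_comp [simp]: "ccod C f = Y \<Longrightarrow> \<one>\<^bsub>Y\<^esub> \<cdot> f = f"
  using category by (auto simp: category_def)

lemma comp_assoc [simp]:
  "ccod C f = cdom C g \<Longrightarrow> ccod C g = cdom C h \<Longrightarrow> (h \<cdot> g) \<cdot> f = h \<cdot> g \<cdot> f"
  using category by (simp add: category_def)

end

locale category_with_zero_and_products =
  fixes C :: "('o, 'm) cat"
  assumes pointed: "pointed C" and finite_products: "has_finite_products C"

sublocale category_with_zero_and_products \<subseteq> categorical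
  using pointed by unfold_locales (simp add: pointed_def)

context category_with_zero_and_products
begin

abbreviation zero_syntax ("\<zero>\<^bsub>_,_\<^esub>") where "\<zero>\<^bsub>X,Y\<^esub> \<equiv> zmor C X Y"
abbreviation pair_syntax ("\<langle>_, _\<rangle>") where "\<langle>f, g\<rangle> \<equiv> pair C f g"
abbreviation prodobj_syntax (infixr "\<otimes>" 70) where "X \<otimes> Y \<equiv> prodobj C X Y"

definition zero_obj :: 'o where "zero_obj = (SOME Z. zero_object C Z)"

lemma zero_object_zero_obj: "zero_object C zero_obj"
  using pointed unfolding pointed_def zero_obj_def by (metis someI_ex)

lemma ex1_to_zero_obj: "\<exists>!f. f \<in> hom C X zero_obj"
  using zero_object_zero_obj unfolding zero_object_def terminal_def by blast

lemma ex1_from_zero_obj: "\<exists>!f. f \<in> hom C zero_obj Y"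
  using zero_object_zero_obj unfolding zero_object_def initial_def by blast

lemma through_zero_obj_eq_zero:
  assumes "a \<in> hom C X zero_obj" and "b \<in> hom C zero_obj Y"
  shows "b \<cdot> a = \<zero>\<^bsub>X,Y\<^esub>"
proof -
  have "(THE f. f \<in> hom C X zero_obj) = a"
    by (rule the1_equality[OF ex1_to_zero_obj assms(1)])
  moreover have "(THE f. f \<in> hom C zero_obj Y) = b"
    by (rule the1_equality[OF ex1_from_zero_obj assms(2)])
  ultimately show ?thesis
    by (simp add: zmor_def zero_obj_def)
qed

lemma zero_hom: "\<zero>\<^bsub>X,Y\<^esub> \<in> hom C X Y"
proof -
  obtain a b where "a \<in> hom C X zero_obj" "b \<in> hom C zero_obj Y"
    using ex1_to_zero_obj ex1_from_zero_obj by blast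
  then have "b \<cdot> a \<in> hom C X Y"
    by simp
  with through_zero_obj_eq_zero[OF \<open>a \<in> hom C X zero_obj\<close> \<open>b \<in> hom C zero_obj Y\<close>]
  show ?thesis
    by simp
qed

lemma dom_zero [simp]: "cdom C \<zero>\<^bsub>X,Y\<^esub> = X" and cod_zero [simp]: "ccod C \<zero>\<^bsub>X,Y\<^esub> = Y"
  using zero_hom by simp_all

lemma zero_comp [simp]: "ccod C f = X \<Longrightarrow> \<zero>\<^bsub>X,Y\<^esub> \<cdot> f = \<zero>\<^bsub>cdom C f,Y\<^esub>"
proof -
  assume f: "ccod C f = X"
  obtain a b where a: "a \<in> hom C X zero_obj" and b: "b \<in> hom C zero_obj Y"
    using ex1_to_zero_obj ex1_from_zero_obj by blast
  have "\<zero>\<^bsub>X,Y\<^esub> \<cdot> f = (b \<cdot> a) \<cdot> f"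
    using through_zero_obj_eq_zero[OF a b] by simp
  also have "\<dots> = b \<cdot> a \<cdot> f"
    using a b f by simp
  also have "\<dots> = \<zero>\<^bsub>cdom C f,Y\<^esub>"
    by (rule through_zero_obj_eq_zero) (use a b f in simp_all)
  finally show ?thesis .
qed

lemma comp_zero [simp]: "cdom C f = Y \<Longrightarrow> f \<cdot> \<zero>\<^bsub>X,Y\<^esub> = \<zero>\<^bsub>X,ccod C f\<^esub>"
proof -
  assume f: "cdom C f = Y"
  obtain a b where a: "a \<in> hom C X zero_obj" and b: "b \<in> hom C zero_obj Y"
    using ex1_to_zero_obj ex1_from_zero_obj by blast
  have "f \<cdot> \<zero>\<^bsub>X,Y\<^esub> = f \<cdot> b \<cdot> a"
    using through_zero_obj_eq_zero[OF a b] by simp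
  also have "\<dots> = (f \<cdot> b) \<cdot> a"
    using a b f by simp
  also have "\<dots> = \<zero>\<^bsub>X,ccod C f\<^esub>"
    by (rule through_zero_obj_eq_zero) (use a b f in simp_all)
  finally show ?thesis .
qed

lemma product_prod_choice: "is_product C (X \<otimes> Y) X Y (proj1 C X Y) (proj2 C X Y)"
proof -
  obtain P p q where "is_product C P X Y p q"
    using finite_products unfolding has_finite_products_def by blast
  then have "\<exists>t. (\<lambda>(P, p, q). is_product C P X Y p q) t"
    by auto
  then have "(\<lambda>(P, p, q). is_product C P X Y p q) (prod_choice C X Y)"
    unfolding prod_choice_def by (rule someI_ex)
  then show ?thesis
    by (simp add: prodobj_def proj1_def proj2_def split: prod.splits)
qed

lemma dom_proj1 [simp]: "cdom C (proj1 C X Y) = X \<otimes> Y"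
  and cod_proj1 [simp]: "ccod C (proj1 C X Y) = X"
  and dom_proj2 [simp]: "cdom C (proj2 C X Y) = X \<otimes> Y"
  and cod_proj2 [simp]: "ccod C (proj2 C X Y) = Y"
  using product_prod_choice[of X Y] by (simp_all add: is_product_def)

lemma ex1_mediating:
  "f \<in> hom C T X \<Longrightarrow> g \<in> hom C T Y \<Longrightarrow>
    \<exists>!h. h \<in> hom C T (X \<otimes> Y) \<and> proj1 C X Y \<cdot> h = f \<and> proj2 C X Y \<cdot> h = g"
  using product_prod_choice[of X Y] unfolding is_product_def by blast

lemma pair_mediating:
  assumes "cdom C f = cdom C g"
  shows "\<langle>f, g\<rangle> \<in> hom C (cdom C f) (ccod C f \<otimes> ccod C g) \<and>
    proj1 C (ccod C f) (ccod C g) \<cdot> \<langle>f, g\<rangle> = f \<and> proj2 C (ccod C f) (ccod C g) \<cdot> \<langle>f, g\<rangle> = g"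
  unfolding pair_def by (rule theI', rule ex1_mediating) (use assms in simp_all)

lemma dom_pair [simp]: "cdom C f = cdom C g \<Longrightarrow> cdom C \<langle>f, g\<rangle> = cdom C f"
  and cod_pair [simp]: "cdom C f = cdom C g \<Longrightarrow> ccod C \<langle>f, g\<rangle> = ccod C f \<otimes> ccod C g"
  using pair_mediating by simp_all

lemma proj1_pair [simp]:
    "cdom C f = cdom C g \<Longrightarrow> ccod C f = X \<Longrightarrow> ccod C g = Y \<Longrightarrow> proj1 C X Y \<cdot> \<langle>f, g\<rangle> = f"
  and proj2_pair [simp]:
    "cdom C f = cdom C g \<Longrightarrow> ccod C f = X \<Longrightarrow> ccod C g = Y \<Longrightarrow> proj2 C X Y \<cdot> \<langle>f, g\<rangle> = g"
  using pair_mediating by auto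

lemma pair_eta:
  assumes h: "h \<in> hom C T (X \<otimes> Y)"
  shows "\<langle>proj1 C X Y \<cdot> h, proj2 C X Y \<cdot> h\<rangle> = h"
proof -
  let ?f = "proj1 C X Y \<cdot> h" and ?g = "proj2 C X Y \<cdot> h"
  have "?f \<in> hom C T X" and "?g \<in> hom C T Y"
    using h by simp_all
  then have "\<exists>!k. k \<in> hom C T (X \<otimes> Y) \<and> proj1 C X Y \<cdot> k = ?f \<and> proj2 C X Y \<cdot> k = ?g"
    by (rule ex1_mediating)
  moreover have "\<langle>?f, ?g\<rangle> \<in> hom C T (X \<otimes> Y) \<and> proj1 C X Y \<cdot> \<langle>?f, ?g\<rangle> = ?f \<and> proj2 C X Y \<cdot> \<langle>?f, ?g\<rangle> = ?g"
    using h pair_mediating[of ?f ?g] by simp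
  ultimately show ?thesis
    using h by blast
qed

lemma pair_comp [simp]:
  assumes "cdom C f = cdom C g" and "ccod C h = cdom C f"
  shows "\<langle>f, g\<rangle> \<cdot> h = \<langle>f \<cdot> h, g \<cdot> h\<rangle>"
proof -
  let ?X = "ccod C f" and ?Y = "ccod C g"
  have "proj1 C ?X ?Y \<cdot> \<langle>f, g\<rangle> \<cdot> h = f \<cdot> h" and "proj2 C ?X ?Y \<cdot> \<langle>f, g\<rangle> \<cdot> h = g \<cdot> h"
    using assms by (simp_all flip: comp_assoc)
  with pair_eta[of "\<langle>f, g\<rangle> \<cdot> h" "cdom C h" ?X ?Y] assms show ?thesis
    by simp
qed

lemma pair_proj [simp]: "\<langle>proj1 C X Y, proj2 C X Y\<rangle> = \<one>\<^bsub>X \<otimes> Y\<^esub>"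
  using pair_eta[of "\<one>\<^bsub>X \<otimes> Y\<^esub>"] by simp

lemma terminal_term_obj: "terminal C (term_obj C)"
  using finite_products unfolding has_finite_products_def term_obj_def by (metis someI_ex)

lemma bang_hom: "bang C T \<in> hom C T (term_obj C)"
  using terminal_term_obj unfolding terminal_def bang_def by (metis theI')

lemma dom_bang [simp]: "cdom C (bang C T) = T" and cod_bang [simp]: "ccod C (bang C T) = term_obj C"
  using bang_hom by simp_all

lemma from_terminal_eq_zero:
  assumes f: "f \<in> hom C (term_obj C) X"
  shows "f = \<zero>\<^bsub>term_obj C,X\<^esub>"
proof -
  obtain u v where u: "u \<in> hom C zero_obj (term_obj C)" and v: "v \<in> hom C (term_obj C) zero_obj"
    using ex1_to_zero_obj ex1_from_zero_obj by blast
  have "u \<cdot> v = \<one>\<^bsub>term_obj C\<^esub>"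
    using terminal_term_obj u v unfolding terminal_def by (metis dom_id cod_id dom_comp cod_comp in_hom_iff)
  then have "f = (f \<cdot> u) \<cdot> v"
    using f u v by simp
  also have "\<dots> = \<zero>\<^bsub>term_obj C,X\<^esub>"
    by (rule through_zero_obj_eq_zero) (use f u v in simp_all)
  finally show ?thesis .
qed

lemma subtraction_hom: "subtraction C X s \<Longrightarrow> s \<in> hom C (X \<otimes> X) X"
  by (simp add: subtraction_def)

lemma subtraction_diag:
  assumes s: "subtraction C X s" and x: "ccod C x = X"
  shows "s \<cdot> \<langle>x, x\<rangle> = \<zero>\<^bsub>cdom C x,X\<^esub>"
proof -
  have "(s \<cdot> \<langle>\<one>\<^bsub>X\<^esub>, \<one>\<^bsub>X\<^esub>\<rangle>) \<cdot> x = \<zero>\<^bsub>cdom C x,X\<^esub>"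
    using s x by (simp add: subtraction_def)
  then show ?thesis
    using subtraction_hom[OF s] x by simp
qed

lemma subtraction_zero_right:
  assumes s: "subtraction C X s" and x: "x \<in> hom C T X"
  shows "s \<cdot> \<langle>x, \<zero>\<^bsub>T,X\<^esub>\<rangle> = x"
proof -
  have "(s \<cdot> \<langle>\<one>\<^bsub>X\<^esub>, \<zero>\<^bsub>X,X\<^esub>\<rangle>) \<cdot> x = x"
    using s x by (simp add: subtraction_def)
  then show ?thesis
    using subtraction_hom[OF s] x by simp
qed

lemmas subtraction_simps =
  subtraction_hom[simplified] subtraction_diag subtraction_zero_right[simplified]

lemma internal_ab_groupD:
  assumes G: "internal_ab_group C X m e n"
  shows "m \<in> hom C (X \<otimes> X) X" and "n \<in> hom C X X"
    and "x \<in> hom C T X \<Longrightarrow> m \<cdot> \<langle>x, \<zero>\<^bsub>T,X\<^esub>\<rangle> = x"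
    and "x \<in> hom C T X \<Longrightarrow> m \<cdot> \<langle>x, n \<cdot> x\<rangle> = \<zero>\<^bsub>T,X\<^esub>"
    and "x \<in> hom C T X \<Longrightarrow> y \<in> hom C T X \<Longrightarrow> m \<cdot> \<langle>x, y\<rangle> = m \<cdot> \<langle>y, x\<rangle>"
proof -
  have "e = \<zero>\<^bsub>term_obj C,X\<^esub>"
    using G from_terminal_eq_zero unfolding internal_ab_group_def by blast
  then have "e \<cdot> bang C T = \<zero>\<^bsub>T,X\<^esub>" for T
    by simp
  with G show "m \<in> hom C (X \<otimes> X) X" "n \<in> hom C X X"
    "x \<in> hom C T X \<Longrightarrow> m \<cdot> \<langle>x, \<zero>\<^bsub>T,X\<^esub>\<rangle> = x"
    "x \<in> hom C T X \<Longrightarrow> m \<cdot> \<langle>x, n \<cdot> x\<rangle> = \<zero>\<^bsub>T,X\<^esub>"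
    "x \<in> hom C T X \<Longrightarrow> y \<in> hom C T X \<Longrightarrow> m \<cdot> \<langle>x, y\<rangle> = m \<cdot> \<langle>y, x\<rangle>"
    unfolding internal_ab_group_def by metis+
qed

lemma subtraction_of_internal_ab_group:
  assumes G: "internal_ab_group C X m e n"
  shows "subtraction C X (m \<cdot> prodmap C \<one>\<^bsub>X\<^esub> n)"
proof -
  note [simp] = internal_ab_groupD(1,2)[OF G, simplified] internal_ab_groupD(3)[OF G]
  have "m \<cdot> \<langle>\<one>\<^bsub>X\<^esub>, n\<rangle> = \<zero>\<^bsub>X,X\<^esub>"
    using internal_ab_groupD(4)[OF G, of "\<one>\<^bsub>X\<^esub>"] by simp
  then show ?thesis
    by (simp add: subtraction_def prodmap_def)
qed

end

locale category_with_normal_projections = category_with_zero_and_products +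
  assumes normal_projections: "normal_projections C"
begin

lemma independent_of_first_factor:
  assumes f: "f \<in> hom C (X \<otimes> Y) Z" and f0: "f \<cdot> \<langle>\<one>\<^bsub>X\<^esub>, \<zero>\<^bsub>X,Y\<^esub>\<rangle> = \<zero>\<^bsub>X,Z\<^esub>"
    and x: "x \<in> hom C T X" and y: "y \<in> hom C T Y"
  shows "f \<cdot> \<langle>x, y\<rangle> = f \<cdot> \<langle>\<zero>\<^bsub>T,X\<^esub>, y\<rangle>"
proof -
  have "cokernel C \<langle>\<one>\<^bsub>X\<^esub>, \<zero>\<^bsub>X,Y\<^esub>\<rangle> (proj2 C X Y)"
    using normal_projections by (simp add: normal_projections_def)
  then have "\<forall>g. cdom C g = X \<otimes> Y \<longrightarrow> g \<cdot> \<langle>\<one>\<^bsub>X\<^esub>, \<zero>\<^bsub>X,Y\<^esub>\<rangle> = \<zero>\<^bsub>X,ccod C g\<^esub> \<longrightarrow>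
      (\<exists>!h. h \<in> hom C Y (ccod C g) \<and> h \<cdot> proj2 C X Y = g)"
    by (simp add: cokernel_def)
  from this[rule_format, of f] have "\<exists>!h. h \<in> hom C Y Z \<and> h \<cdot> proj2 C X Y = f"
    using f f0 by simp
  then obtain h where h: "h \<in> hom C Y Z" and f_eq: "f = h \<cdot> proj2 C X Y"
    by blast
  show ?thesis
    using h x y unfolding f_eq by simp
qed

text \<open>The map \<open>(a, b) \<mapsto> a - (a - b)\<close> vanishes on \<open>X \<times> 0\<close>, so \<open>x - (x - y) = 0 - (0 - y)\<close>;
  on the diagonal this gives \<open>0 - (0 - x) = x\<close>.\<close>
lemma subtraction_diff_diff_cancel:
  assumes s: "subtraction C X s" and x: "x \<in> hom C T X" and y: "y \<in> hom C T X"
  shows "s \<cdot> \<langle>x, s \<cdot> \<langle>x, y\<rangle>\<rangle> = y"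
proof -
  note [simp] = subtraction_simps[OF s]
  define f where "f = s \<cdot> \<langle>proj1 C X X, s \<cdot> \<langle>proj1 C X X, proj2 C X X\<rangle>\<rangle>"
  have f: "f \<in> hom C (X \<otimes> X) X" and f0: "f \<cdot> \<langle>\<one>\<^bsub>X\<^esub>, \<zero>\<^bsub>X,X\<^esub>\<rangle> = \<zero>\<^bsub>X,X\<^esub>"
    by (simp_all add: f_def)
  have "\<one>\<^bsub>X\<^esub> = f \<cdot> \<langle>\<one>\<^bsub>X\<^esub>, \<one>\<^bsub>X\<^esub>\<rangle>"
    by (simp add: f_def)
  also have "\<dots> = f \<cdot> \<langle>\<zero>\<^bsub>X,X\<^esub>, \<one>\<^bsub>X\<^esub>\<rangle>"
    by (rule independent_of_first_factor[OF f f0]) simp_all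
  finally have neg_neg: "s \<cdot> \<langle>\<zero>\<^bsub>X,X\<^esub>, s \<cdot> \<langle>\<zero>\<^bsub>X,X\<^esub>, \<one>\<^bsub>X\<^esub>\<rangle>\<rangle> = \<one>\<^bsub>X\<^esub>"
    by (simp add: f_def)
  have "s \<cdot> \<langle>x, s \<cdot> \<langle>x, y\<rangle>\<rangle> = f \<cdot> \<langle>x, y\<rangle>"
    using x y by (simp add: f_def)
  also have "\<dots> = f \<cdot> \<langle>\<zero>\<^bsub>T,X\<^esub>, y\<rangle>"
    by (rule independent_of_first_factor[OF f f0 x y])
  also have "\<dots> = (s \<cdot> \<langle>\<zero>\<^bsub>X,X\<^esub>, s \<cdot> \<langle>\<zero>\<^bsub>X,X\<^esub>, \<one>\<^bsub>X\<^esub>\<rangle>\<rangle>) \<cdot> y"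
    using y by (simp add: f_def)
  finally show ?thesis
    using y by (simp add: neg_neg)
qed

lemma subtraction_eq_zeroD:
  assumes s: "subtraction C X s" and x: "x \<in> hom C T X" and y: "y \<in> hom C T X"
    and "s \<cdot> \<langle>x, y\<rangle> = \<zero>\<^bsub>T,X\<^esub>"
  shows "x = y"
  using subtraction_diff_diff_cancel[OF s x y] subtraction_zero_right[OF s x] assms(4) by simp

text \<open>The difference \<open>s(f, g)\<close> vanishes on \<open>X \<times> 0\<close>, hence does not depend on the first
  variable, and it vanishes on \<open>0 \<times> Y\<close>.\<close>
lemma product_maps_eqI:
  assumes s: "subtraction C Z s" and f: "f \<in> hom C (X \<otimes> Y) Z" and g: "g \<in> hom C (X \<otimes> Y) Z"
    and on_first: "f \<cdot> \<langle>\<one>\<^bsub>X\<^esub>, \<zero>\<^bsub>X,Y\<^esub>\<rangle> = g \<cdot> \<langle>\<one>\<^bsub>X\<^esub>, \<zero>\<^bsub>X,Y\<^esub>\<rangle>"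
    and on_second: "f \<cdot> \<langle>\<zero>\<^bsub>Y,X\<^esub>, \<one>\<^bsub>Y\<^esub>\<rangle> = g \<cdot> \<langle>\<zero>\<^bsub>Y,X\<^esub>, \<one>\<^bsub>Y\<^esub>\<rangle>"
  shows "f = g"
proof -
  note [simp] = subtraction_simps[OF s]
  let ?d = "s \<cdot> \<langle>f, g\<rangle>"
  have d: "?d \<in> hom C (X \<otimes> Y) Z"
    using f g by simp
  have d0: "?d \<cdot> \<langle>\<one>\<^bsub>X\<^esub>, \<zero>\<^bsub>X,Y\<^esub>\<rangle> = \<zero>\<^bsub>X,Z\<^esub>"
    using f g on_first by simp
  have "?d = ?d \<cdot> \<langle>proj1 C X Y, proj2 C X Y\<rangle>"
    using d by simp
  also have "\<dots> = ?d \<cdot> \<langle>\<zero>\<^bsub>X \<otimes> Y,X\<^esub>, proj2 C X Y\<rangle>"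
    by (rule independent_of_first_factor[OF d d0]) simp_all
  also have "\<dots> = s \<cdot> \<langle>(f \<cdot> \<langle>\<zero>\<^bsub>Y,X\<^esub>, \<one>\<^bsub>Y\<^esub>\<rangle>) \<cdot> proj2 C X Y,
                          (g \<cdot> \<langle>\<zero>\<^bsub>Y,X\<^esub>, \<one>\<^bsub>Y\<^esub>\<rangle>) \<cdot> proj2 C X Y\<rangle>"
    using f g by simp
  also have "\<dots> = \<zero>\<^bsub>X \<otimes> Y,Z\<^esub>"
    using g unfolding on_second by simp
  finally show ?thesis
    by (rule subtraction_eq_zeroD[OF s f g])
qed

lemma vanishing_on_diagonal_antisym:
  assumes s: "subtraction C Z s" and f: "f \<in> hom C (X \<otimes> X) Z"
    and diag: "f \<cdot> \<langle>\<one>\<^bsub>X\<^esub>, \<one>\<^bsub>X\<^esub>\<rangle> = \<zero>\<^bsub>X,Z\<^esub>"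
  shows "f \<cdot> \<langle>\<zero>\<^bsub>X,X\<^esub>, \<one>\<^bsub>X\<^esub>\<rangle> = s \<cdot> \<langle>\<zero>\<^bsub>X,Z\<^esub>, f \<cdot> \<langle>\<one>\<^bsub>X\<^esub>, \<zero>\<^bsub>X,X\<^esub>\<rangle>\<rangle>"
proof -
  note [simp] = subtraction_simps[OF s]
  let ?h = "f \<cdot> \<langle>\<one>\<^bsub>X\<^esub>, \<zero>\<^bsub>X,X\<^esub>\<rangle>"
  let ?G = "s \<cdot> \<langle>f, ?h \<cdot> proj1 C X X\<rangle>"
  have G: "?G \<in> hom C (X \<otimes> X) Z" and G0: "?G \<cdot> \<langle>\<one>\<^bsub>X\<^esub>, \<zero>\<^bsub>X,X\<^esub>\<rangle> = \<zero>\<^bsub>X,Z\<^esub>"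
    using f by simp_all
  have "?G \<cdot> \<langle>\<one>\<^bsub>X\<^esub>, \<one>\<^bsub>X\<^esub>\<rangle> = ?G \<cdot> \<langle>\<zero>\<^bsub>X,X\<^esub>, \<one>\<^bsub>X\<^esub>\<rangle>"
    by (rule independent_of_first_factor[OF G G0]) simp_all
  moreover have "f \<cdot> \<langle>\<zero>\<^bsub>X,X\<^esub>, \<zero>\<^bsub>X,X\<^esub>\<rangle> = (f \<cdot> \<langle>\<one>\<^bsub>X\<^esub>, \<one>\<^bsub>X\<^esub>\<rangle>) \<cdot> \<zero>\<^bsub>X,X\<^esub>"
    using f by (simp del: comp_zero)
  ultimately show ?thesis
    using f diag by simp
qed

lemma subtraction_homomorphic:
  assumes s: "subtraction C X s" and s': "subtraction C X' s'" and g: "g \<in> hom C X X'"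
  shows "homomorphic C s s' g"
proof -
  note [simp] = subtraction_simps[OF s] subtraction_simps[OF s']
  have on_second:
    "(g \<cdot> s) \<cdot> \<langle>\<zero>\<^bsub>X,X\<^esub>, \<one>\<^bsub>X\<^esub>\<rangle> = s' \<cdot> \<langle>\<zero>\<^bsub>X,X'\<^esub>, (g \<cdot> s) \<cdot> \<langle>\<one>\<^bsub>X\<^esub>, \<zero>\<^bsub>X,X\<^esub>\<rangle>\<rangle>"
    by (rule vanishing_on_diagonal_antisym[OF s']) (use g in simp_all)
  show ?thesis
    unfolding homomorphic_def prodmap_def
    by (rule product_maps_eqI[OF s', where X = X and Y = X]) (use g on_second in simp_all)
qed

lemma subtraction_unique:
  assumes s: "subtraction C X s" and t: "subtraction C X t"
  shows "s = t"
proof -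
  note [simp] = subtraction_simps[OF s] subtraction_simps[OF t]
  have on_second: "t \<cdot> \<langle>\<zero>\<^bsub>X,X\<^esub>, \<one>\<^bsub>X\<^esub>\<rangle> = s \<cdot> \<langle>\<zero>\<^bsub>X,X\<^esub>, t \<cdot> \<langle>\<one>\<^bsub>X\<^esub>, \<zero>\<^bsub>X,X\<^esub>\<rangle>\<rangle>"
    by (rule vanishing_on_diagonal_antisym[OF s]) simp_all
  show ?thesis
    by (rule product_maps_eqI[OF s, where X = X and Y = X]) (simp_all add: on_second)
qed

text \<open>Associativity and commutativity are first proved for the generic elements (the projections),
  where they are equations between maps out of a product.\<close>
lemma internal_ab_group_of_subtraction:
  assumes s: "subtraction C X s"
  shows "\<exists>m e n. internal_ab_group C X m e n \<and> s = m \<cdot> prodmap C \<one>\<^bsub>X\<^esub> n"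
proof -
  note [simp] = subtraction_simps[OF s] subtraction_diff_diff_cancel[OF s]
  define n where "n = s \<cdot> \<langle>\<zero>\<^bsub>X,X\<^esub>, \<one>\<^bsub>X\<^esub>\<rangle>"
  define m where "m = s \<cdot> \<langle>proj1 C X X, n \<cdot> proj2 C X X\<rangle>"
  define e where "e = \<zero>\<^bsub>term_obj C,X\<^esub>"
  let ?P = "X \<otimes> X"
  let ?x = "proj1 C X X \<cdot> proj1 C ?P X" and ?y = "proj2 C X X \<cdot> proj1 C ?P X"
    and ?z = "proj2 C ?P X"
  have hom: "m \<in> hom C (X \<otimes> X) X" "e \<in> hom C (term_obj C) X" "n \<in> hom C X X"
    by (simp_all add: m_def n_def e_def)
  have generic_assoc: "m \<cdot> \<langle>m \<cdot> \<langle>?x, ?y\<rangle>, ?z\<rangle> = m \<cdot> \<langle>?x, m \<cdot> \<langle>?y, ?z\<rangle>\<rangle>"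
    by (rule product_maps_eqI[OF s, where X = ?P and Y = X]) (simp_all add: m_def n_def)
  have generic_commute: "m = m \<cdot> \<langle>proj2 C X X, proj1 C X X\<rangle>"
    by (rule product_maps_eqI[OF s, where X = X and Y = X]) (simp_all add: m_def n_def)
  have assoc: "m \<cdot> \<langle>m \<cdot> \<langle>x, y\<rangle>, z\<rangle> = m \<cdot> \<langle>x, m \<cdot> \<langle>y, z\<rangle>\<rangle>"
    if "x \<in> hom C T X" "y \<in> hom C T X" "z \<in> hom C T X" for T x y z
  proof -
    have "(m \<cdot> \<langle>m \<cdot> \<langle>?x, ?y\<rangle>, ?z\<rangle>) \<cdot> \<langle>\<langle>x, y\<rangle>, z\<rangle> = (m \<cdot> \<langle>?x, m \<cdot> \<langle>?y, ?z\<rangle>\<rangle>) \<cdot> \<langle>\<langle>x, y\<rangle>, z\<rangle>"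
      unfolding generic_assoc ..
    with that show ?thesis
      by (simp add: m_def n_def)
  qed
  have commute: "m \<cdot> \<langle>x, y\<rangle> = m \<cdot> \<langle>y, x\<rangle>" if "x \<in> hom C T X" "y \<in> hom C T X" for T x y
  proof -
    have "m \<cdot> \<langle>x, y\<rangle> = (m \<cdot> \<langle>proj2 C X X, proj1 C X X\<rangle>) \<cdot> \<langle>x, y\<rangle>"
      using generic_commute by simp
    with that show ?thesis
      by (simp add: m_def n_def)
  qed
  have unit: "m \<cdot> \<langle>x, e \<cdot> bang C T\<rangle> = x"
    and inverse: "m \<cdot> \<langle>x, n \<cdot> x\<rangle> = e \<cdot> bang C T" if "x \<in> hom C T X" for T x
    using that by (simp_all add: m_def n_def e_def)
  have "internal_ab_group C X m e n"
    unfolding internal_ab_group_def using hom assoc unit inverse commute by blast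
  moreover have "s = m \<cdot> prodmap C \<one>\<^bsub>X\<^esub> n"
    by (simp add: prodmap_def m_def n_def)
  ultimately show ?thesis
    by blast
qed

lemma internal_group_hom_of_internal_ab_group:
  assumes G: "internal_ab_group C X m e n" and G': "internal_ab_group C X' m' e' n'"
    and g: "g \<in> hom C X X'"
  shows "internal_group_hom C m m' g"
proof -
  note [simp] = internal_ab_groupD(1,2)[OF G, simplified] internal_ab_groupD(3)[OF G]
    internal_ab_groupD(1,2)[OF G', simplified] internal_ab_groupD(3)[OF G']
  have left_unit: "m \<cdot> \<langle>\<zero>\<^bsub>X,X\<^esub>, \<one>\<^bsub>X\<^esub>\<rangle> = \<one>\<^bsub>X\<^esub>"
    using internal_ab_groupD(5)[OF G, of "\<zero>\<^bsub>X,X\<^esub>" X "\<one>\<^bsub>X\<^esub>"] by simp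
  have left_unit': "m' \<cdot> \<langle>\<zero>\<^bsub>X,X'\<^esub>, g\<rangle> = g"
    using internal_ab_groupD(5)[OF G', of "\<zero>\<^bsub>X,X'\<^esub>" X g] g by simp
  show ?thesis
    unfolding internal_group_hom_def prodmap_def
    by (rule product_maps_eqI[OF subtraction_of_internal_ab_group[OF G'], where X = X and Y = X])
      (use g left_unit left_unit' in simp_all)
qed

end

theorem theorem2p1:
  fixes C :: "('o, 'm) cat"
  assumes "pointed C" and "has_finite_products C" and "normal_projections C"
  shows "(\<forall>X X' s s' g. subtraction C X s \<longrightarrow> subtraction C X' s' \<longrightarrow> g \<in> hom C X X' \<longrightarrow>
            homomorphic C s s' g) \<and>
         (\<forall>X s t. subtraction C X s \<longrightarrow> subtraction C X t \<longrightarrow> s = t) \<and>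
         (\<forall>X s. subtraction C X s \<longrightarrow>
            (\<exists>m e n. internal_ab_group C X m e n \<and> s = ccomp C m (prodmap C (cid C X) n))) \<and>
         (\<forall>X X' m e n m' e' n' g. internal_ab_group C X m e n \<longrightarrow> internal_ab_group C X' m' e' n' \<longrightarrow>
            g \<in> hom C X X' \<longrightarrow> internal_group_hom C m m' g)"
proof -
  interpret category_with_normal_projections C
    using assms by unfold_locales
  show ?thesis
    using subtraction_homomorphic subtraction_unique internal_ab_group_of_subtraction
      internal_group_hom_of_internal_ab_group
    by blast
qed

end
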